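(* In the personalized Bayesian linear regression model with DP described in the context, suppose $\mathbf{X}_n^{\intercal}\mathbf{X}_n=\rho\mathbf{I}_d$ for all $n$, with $\rho>0$. Then the DP-perturbed optimal personalized model is $$\tilde{\boldsymbol{\varpi}}_n^{\ast}(\lambda)=\frac{b}{(2-\lambda)\rho+b\lambda}\Big(\Big(\frac{(2-\lambda)\rho}{b}+\frac{\lambda}{N}\Big)\hat{\boldsymbol{u}}_n+\frac{\lambda}{N}\sum_{m\ne n}\hat{\boldsymbol{u}}_m+\frac{\lambda}{N}\sum_{m=1}^N\mathbf{z}_m\Big),$$ and, conditionally on the estimates $\hat{\boldsymbol{u}}_1,\dots,\hat{\boldsymbol{u}}_N$, the optimal local model satisfies $$\boldsymbol{u}_n^{\ast}=\frac{\sigma_w^2\rho}{\sigma^2}\hat{\boldsymbol{u}}_n+\frac{\sigma_w^2\rho}{\sigma^2+N\zeta^2\rho}\sum_{m\ne n}\hat{\boldsymbol{u}}_m+\boldsymbol{\vartheta}_n,$$ where $\boldsymbol{\vartheta}_n\sim\mathcal{N}(0,\sigma_w^2\mathbf{I}_d)$ and $\sigma_w^2=\Big(\frac{N-1}{\sigma^2/\rho+N\zeta^2}+\frac{\rho}{\sigma^2}\Big)^{-1}$.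
   Context: Model: $N$ clients, each with $b$ samples $\mathbf{X}_n\in\mathbb{R}^{b\times d}$, $\mathbf{Y}_n\in\mathbb{R}^b$. The optimal global model $\boldsymbol{\omega}^{\ast}$ has the non-informative (uniform) prior on $\mathbb{R}^d$; $\boldsymbol{u}_n^{\ast}=\boldsymbol{\omega}^{\ast}+\boldsymbol{\tau}_n$ with $\boldsymbol{\tau}_n\sim\mathcal{N}(0,\zeta^2\mathbf{I}_d)$ i.i.d.; $\mathbf{Y}_n=\mathbf{X}_n\boldsymbol{u}_n^{\ast}+\boldsymbol{\nu}_n$ with $\boldsymbol{\nu}_n\sim\mathcal{N}(0,\sigma^2\mathbf{I}_b)$. Local loss $F_n(\boldsymbol{u})=\frac1b\|\mathbf{X}_n\boldsymbol{u}-\mathbf{Y}_n\|^2$; local estimate $\hat{\boldsymbol{u}}_n=(\mathbf{X}_n^{\intercal}\mathbf{X}_n)^{-1}\mathbf{X}_n^{\intercal}\mathbf{Y}_n$. With DP, the server receives $\tilde{\boldsymbol{u}}_n=\hat{\boldsymbol{u}}_n+\mathbf{z}_n$, $\mathbf{z}_n\sim\mathcal{N}(0,\sigma_u^2\mathbf{I}_d)$ i.i.d., and forms $\tilde{\boldsymbol{\omega}}^{\ast}=\sum_{n=1}^N(\mathbf{X}^{\intercal}\mathbf{X})^{-1}\mathbf{X}_n^{\intercal}\mathbf{X}_n\tilde{\boldsymbol{u}}_n$, where $\mathbf{X}=(\mathbf{X}_1^{\top}\cdots\mathbf{X}_N^{\top})^{\top}$. For $\lambda\in[0,2]$, $\tilde{\boldsymbol{\varpi}}_n^{\ast}(\lambda)=\arg\min_{\boldsymbol{\varpi}}\big[(1-\frac{\lambda}{2})F_n(\boldsymbol{\varpi})+\frac{\lambda}{2}\|\boldsymbol{\varpi}-\tilde{\boldsymbol{\omega}}^{\ast}\|^2\big]$.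 *)

theory Defs
  imports "HOL-Probability.Probability"
begin

text \<open>Clients are indexed by a finite type 'c (N = CARD('c)), samples per client by a
finite type 'b (b = CARD('b)), model coordinates by a finite type 'd (d = CARD('d)).
A local design matrix X_n is a b x d matrix of type real^'d^'b.\<close>

definition num_clients :: "'c::finite itself \<Rightarrow> real" where
  "num_clients _ = real CARD('c)"

definition num_samples :: "'b::finite itself \<Rightarrow> real" where
  "num_samples _ = real CARD('b)"

definition local_est :: "real^'d^'b \<Rightarrow> real^'b \<Rightarrow> real^'d" where
  "local_est Xn Yn = matrix_inv (transpose Xn ** Xn) *v (transpose Xn *v Yn)"

definition stack_design :: "('c::finite \<Rightarrow> real^'d^'b::finite) \<Rightarrow> real^'d^('c \<times> 'b)" where
  "stack_design X = (\<chi> p. X (fst p) $ snd p)"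

definition global_dp ::
  "('c::finite \<Rightarrow> real^'d^'b::finite) \<Rightarrow> ('c \<Rightarrow> real^'b) \<Rightarrow> ('c \<Rightarrow> real^'d) \<Rightarrow> real^'d" where
  "global_dp X Y z =
     (\<Sum>m\<in>UNIV. matrix_inv (transpose (stack_design X) ** stack_design X)
                 *v ((transpose (X m) ** X m) *v (local_est (X m) (Y m) + z m)))"

definition local_loss :: "real^'d^'b::finite \<Rightarrow> real^'b \<Rightarrow> real^'d \<Rightarrow> real" where
  "local_loss Xn Yn u = (1 / num_samples TYPE('b)) * (norm (Xn *v u - Yn))\<^sup>2"

definition pers_obj ::
  "('c::finite \<Rightarrow> real^'d^'b::finite) \<Rightarrow> ('c \<Rightarrow> real^'b) \<Rightarrow> ('c \<Rightarrow> real^'d)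
     \<Rightarrow> real \<Rightarrow> 'c \<Rightarrow> real^'d \<Rightarrow> real" where
  "pers_obj X Y z lam n w =
     (1 - lam / 2) * local_loss (X n) (Y n) w + (lam / 2) * (norm (w - global_dp X Y z))\<^sup>2"

text \<open>Density of N(mu, s^2 I) on real^'d (s is the standard deviation).\<close>
definition gauss_vec_density :: "real^'k::finite \<Rightarrow> real \<Rightarrow> real^'k \<Rightarrow> real" where
  "gauss_vec_density mu s x = (\<Prod>i\<in>UNIV. normal_density (mu $ i) s (x $ i))"

text \<open>Joint (improper, uniform prior on omega) density of (omega, u_1..u_N, Y_1..Y_N):
  u_m | omega ~ N(omega, zeta^2 I_d), Y_m | u_m ~ N(X_m u_m, sig^2 I_b), independently.\<close>
definition joint_density ::
  "real \<Rightarrow> real \<Rightarrow> ('c::finite \<Rightarrow> real^'d^'b::finite) \<Rightarrow> ('c \<Rightarrow> real^'b)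
     \<Rightarrow> real^'d \<Rightarrow> real^'d^'c \<Rightarrow> real" where
  "joint_density zeta sig X Y omega u =
     (\<Prod>m\<in>UNIV. gauss_vec_density omega zeta (u $ m) * gauss_vec_density (X m *v (u $ m)) sig (Y m))"

text \<open>Unnormalised posterior mass of the event u_n in A given the data (Lebesgue measure on
omega = non-informative prior; integrate out all latent variables).\<close>
definition post_mass ::
  "real \<Rightarrow> real \<Rightarrow> ('c::finite \<Rightarrow> real^'d^'b::finite) \<Rightarrow> ('c \<Rightarrow> real^'b)
     \<Rightarrow> 'c \<Rightarrow> (real^'d) set \<Rightarrow> ennreal" where
  "post_mass zeta sig X Y n A =
     (\<integral>\<^sup>+ omega. (\<integral>\<^sup>+ u. indicator A (u $ n) * ennreal (joint_density zeta sig X Y omega u) \<partial>lborel) \<partial>lborel)"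

definition post_prob ::
  "real \<Rightarrow> real \<Rightarrow> ('c::finite \<Rightarrow> real^'d^'b::finite) \<Rightarrow> ('c \<Rightarrow> real^'b)
     \<Rightarrow> 'c \<Rightarrow> (real^'d) set \<Rightarrow> ennreal" where
  "post_prob zeta sig X Y n A = post_mass zeta sig X Y n A / post_mass zeta sig X Y n UNIV"

end

theory Submission
  imports Defs
begin

(* With X_n^T X_n = rho I the loss F_n(w) is (rho/b) |w - uhat_n|^2 plus a constant, and the
   DP-aggregated global model is the plain average of the uhat_m + z_m.  The personalized objective
   is therefore a positive combination of two squared distances, uniquely minimized at their
   weighted mean.

   For the posterior, the likelihood of Y_m given u_m is proportional to N(u_m; uhat_m, sig^2/rho).
   Integrating out u_m for m <> n turns the prior N(u_m; omega, zeta^2) into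
   N(omega; uhat_m, zeta^2 + sig^2/rho), and the product of these N - 1 factors is proportional to a
   Gaussian in omega centred at their average.  Integrating omega (flat prior) against
   N(u_n; omega, zeta^2) and multiplying by the likelihood of client n leaves a product of two
   Gaussian densities in u_n, which is again Gaussian, with mean mu and variance sigma_w^2. *)

section \<open>Lebesgue measure on vectors\<close>

lemma borel_measurable_vec_lambda[measurable]:
  "(\<lambda>f. vec_lambda f :: 'a::euclidean_space^'n::finite) \<in> PiM UNIV (\<lambda>_. borel) \<rightarrow>\<^sub>M borel"
proof -
  have "(\<lambda>f. (vec_lambda f :: 'a^'n) \<bullet> i) \<in> borel_measurable (PiM UNIV (\<lambda>_. borel))"
    if "i \<in> Basis" for i :: "'a^'n"
  proof -
    obtain j u where "u \<in> Basis" "i = axis j u"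
      using \<open>i \<in> Basis\<close> unfolding Basis_vec_def by auto
    then have "(\<lambda>f. (vec_lambda f :: 'a^'n) \<bullet> i) = (\<lambda>f. f j \<bullet> u)"
      by (auto simp: inner_axis)
    then show ?thesis by simp
  qed
  then show ?thesis by (subst borel_measurable_euclidean_space) auto
qed

lemma borel_measurable_vec_nth[measurable (raw)]:
  "f \<in> borel_measurable M \<Longrightarrow> (\<lambda>x. (f x :: 'a::euclidean_space^'n::finite) $ i) \<in> borel_measurable M"
  by (erule measurable_compose[OF _ borel_measurable_continuous_onI])
     (simp add: bounded_linear_vec_nth linear_continuous_on)

lemma lborel_vec_eq_distr_PiM:
  "(lborel :: ('a::euclidean_space^'n::finite) measure) = distr (PiM UNIV (\<lambda>_. lborel)) borel vec_lambda"
proof (rule lborel_eqI)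
  interpret P: finite_product_sigma_finite "\<lambda>_. lborel :: 'a measure" "UNIV :: 'n set"
    by standard auto
  fix l u :: "'a^'n"
  assume le: "\<And>b. b \<in> Basis \<Longrightarrow> l \<bullet> b \<le> u \<bullet> b"
  have le_nth: "(l$j) \<bullet> b \<le> (u$j) \<bullet> b" if "b \<in> Basis" for j b
    using le[of "axis j b"] that by (auto simp: Basis_vec_def inner_axis)
  have box_vimage: "vec_lambda -` box l u \<inter> space (PiM UNIV (\<lambda>_. lborel :: 'a measure))
      = PiE UNIV (\<lambda>j. box (l$j) (u$j))"
    by (auto simp: mem_box Basis_vec_def inner_axis space_PiM PiE_def Pi_def extensional_def)
  have Basis_vec_split: "(\<Prod>b\<in>Basis. (u - l) \<bullet> b) = (\<Prod>j\<in>UNIV. \<Prod>b\<in>Basis. (u$j - l$j) \<bullet> b)"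
  proof -
    have "(\<Prod>b\<in>(Basis::('a^'n) set). (u - l) \<bullet> b)
        = (\<Prod>j\<in>UNIV. \<Prod>b\<in>axis j ` (Basis::'a set). (u - l) \<bullet> b)"
      unfolding Basis_vec_def UNION_singleton_eq_range
      by (subst prod.UNION_disjoint) (auto simp: axis_eq_axis)
    also have "\<dots> = (\<Prod>j\<in>UNIV. \<Prod>b\<in>Basis. (u$j - l$j) \<bullet> b)"
      by (simp add: prod.reindex inj_on_def axis_eq_axis inner_axis)
    finally show ?thesis .
  qed
  have "emeasure (distr (PiM UNIV (\<lambda>_. lborel)) borel vec_lambda) (box l u)
      = emeasure (PiM UNIV (\<lambda>_. lborel :: 'a measure)) (PiE UNIV (\<lambda>j. box (l$j) (u$j)))"
    by (subst emeasure_distr) (auto simp: box_vimage cong: measurable_cong_sets)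
  also have "\<dots> = (\<Prod>j\<in>UNIV. ennreal (\<Prod>b\<in>Basis. (u$j - l$j) \<bullet> b))"
    using le_nth by (subst P.emeasure_PiM) (auto simp: emeasure_lborel_box)
  also have "\<dots> = ennreal (\<Prod>b\<in>Basis. (u - l) \<bullet> b)"
    unfolding Basis_vec_split
    by (rule prod_ennreal) (auto intro!: prod_nonneg simp: inner_diff_left le_nth)
  finally show "emeasure (distr (PiM UNIV (\<lambda>_. lborel)) borel vec_lambda) (box l u)
      = (\<Prod>b\<in>Basis. (u - l) \<bullet> b)" .
qed simp

lemma nn_integral_lborel_vec_prod:
  fixes f :: "'n::finite \<Rightarrow> 'a::euclidean_space \<Rightarrow> ennreal"
  assumes [measurable]: "\<And>m. f m \<in> borel_measurable borel"
  shows "(\<integral>\<^sup>+ u. (\<Prod>m\<in>UNIV. f m (u$m)) \<partial>(lborel::('a^'n) measure))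
    = (\<Prod>m\<in>UNIV. \<integral>\<^sup>+ v. f m v \<partial>lborel)"
proof -
  interpret P: product_sigma_finite "\<lambda>_. lborel :: 'a measure"
    by standard
  have "(\<integral>\<^sup>+ u. (\<Prod>m\<in>UNIV. f m (u$m)) \<partial>(lborel::('a^'n) measure))
      = (\<integral>\<^sup>+ g. (\<Prod>m\<in>UNIV. f m (g m)) \<partial>PiM UNIV (\<lambda>_. lborel :: 'a measure))"
    by (subst lborel_vec_eq_distr_PiM, subst nn_integral_distr)
       (auto cong: measurable_cong_sets)
  also have "\<dots> = (\<Prod>m\<in>UNIV. \<integral>\<^sup>+ v. f m v \<partial>lborel)"
    by (rule P.product_nn_integral_prod) auto
  finally show ?thesis .
qed

section \<open>Isotropic Gaussian densities\<close>

lemma borel_measurable_gauss_vec_density[measurable (raw)]: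
  assumes [measurable]: "f \<in> borel_measurable M" "g \<in> borel_measurable M"
  shows "(\<lambda>x. gauss_vec_density (f x :: real^'k::finite) s (g x)) \<in> borel_measurable M"
  unfolding gauss_vec_density_def normal_density_def by measurable

lemma gauss_vec_density_nonneg[simp]: "0 \<le> gauss_vec_density mu s x"
  unfolding gauss_vec_density_def by (simp add: prod_nonneg)

lemma gauss_vec_density_pos: "s > 0 \<Longrightarrow> 0 < gauss_vec_density mu s x"
  unfolding gauss_vec_density_def by (simp add: prod_pos normal_density_pos)

lemma gauss_vec_density_commute: "gauss_vec_density mu s x = gauss_vec_density x s mu"
  unfolding gauss_vec_density_def normal_density_def by (simp add: power2_commute)

lemma nn_integral_gauss_vec_density:
  assumes "s > 0"
  shows "(\<integral>\<^sup>+ x. ennreal (gauss_vec_density (mu::real^'k::finite) s x) \<partial>lborel) = 1"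
proof -
  have "(\<integral>\<^sup>+ x. ennreal (normal_density m s x) \<partial>lborel) = 1" for m
    using assms by (subst nn_integral_eq_integral) (auto simp: integral_normal_density)
  then show ?thesis
    unfolding gauss_vec_density_def
    by (simp add: prod_ennreal[symmetric]) (subst nn_integral_lborel_vec_prod; simp)
qed

lemma gauss_vec_density_eq:
  fixes mu :: "real^'k::finite"
  shows "gauss_vec_density mu s x
    = (1 / sqrt (2 * pi * s\<^sup>2)) ^ CARD('k) * exp (- (norm (x - mu))\<^sup>2 / (2 * s\<^sup>2))"
proof -
  have "(norm (x - mu))\<^sup>2 = (\<Sum>i\<in>UNIV. (x$i - mu$i)\<^sup>2)"
    unfolding norm_vec_def L2_set_def by (simp add: sum_nonneg)
  then show ?thesis
    unfolding gauss_vec_density_def normal_density_def prod.distrib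
    by (simp add: exp_sum[symmetric] sum_divide_distrib sum_negf)
qed

(* From here on scales are written as square roots of variances: variances then simply add
   under products and convolutions of densities. *)

lemma normal_density_sqrt:
  "v > 0 \<Longrightarrow> normal_density m (sqrt v) y = exp (- (y - m)\<^sup>2 / (2 * v)) / sqrt (2 * pi * v)"
  by (simp add: normal_density_def)

lemma normal_density_mult:
  fixes s t :: real
  assumes s: "s > 0" and t: "t > 0"
  shows "normal_density a (sqrt s) x * normal_density b (sqrt t) x
    = normal_density b (sqrt (s + t)) a
      * normal_density ((t * a + s * b) / (s + t)) (sqrt (s * t / (s + t))) x"
proof -
  define q where "q = s + t"
  have q: "q > 0" using s t by (simp add: q_def)
  have const: "sqrt (2 * pi * s) * sqrt (2 * pi * t) = sqrt (2 * pi * q) * sqrt (2 * pi * (s * t / q))"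
    unfolding real_sqrt_mult[symmetric] using q by (simp add: field_simps)
  have lhs: "- (x - a)\<^sup>2 / (2 * s) + - (x - b)\<^sup>2 / (2 * t)
      = - (q * (t * (x - a)\<^sup>2 + s * (x - b)\<^sup>2)) / (2 * s * t * q)"
    using s t q by (simp add: field_simps)
  have "x - (t * a + s * b) / q = (q * x - (t * a + s * b)) / q"
    using q by (simp add: field_simps)
  then have rhs: "- (a - b)\<^sup>2 / (2 * q) + - (x - (t * a + s * b) / q)\<^sup>2 / (2 * (s * t / q))
      = - (s * t * (a - b)\<^sup>2 + (q * x - (t * a + s * b))\<^sup>2) / (2 * s * t * q)"
    using s t q by (simp add: field_simps power2_eq_square)
  \<comment> \<open>completing the square in \<open>x\<close>\<close>
  have "q * (t * (x - a)\<^sup>2 + s * (x - b)\<^sup>2) = s * t * (a - b)\<^sup>2 + (q * x - (t * a + s * b))\<^sup>2"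
    unfolding q_def by (simp add: power2_eq_square algebra_simps)
  then have expo: "- (x - a)\<^sup>2 / (2 * s) + - (x - b)\<^sup>2 / (2 * t)
      = - (a - b)\<^sup>2 / (2 * q) + - (x - (t * a + s * b) / q)\<^sup>2 / (2 * (s * t / q))"
    unfolding lhs rhs by simp
  have "normal_density a (sqrt s) x * normal_density b (sqrt t) x
      = exp (- (x - a)\<^sup>2 / (2 * s) + - (x - b)\<^sup>2 / (2 * t)) / (sqrt (2 * pi * s) * sqrt (2 * pi * t))"
    using s t by (simp add: normal_density_sqrt mult_exp_exp)
  also have "\<dots> = exp (- (a - b)\<^sup>2 / (2 * q) + - (x - (t * a + s * b) / q)\<^sup>2 / (2 * (s * t / q)))
      / (sqrt (2 * pi * q) * sqrt (2 * pi * (s * t / q)))"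
    unfolding expo const ..
  also have "\<dots> = normal_density b (sqrt q) a * normal_density ((t * a + s * b) / q) (sqrt (s * t / q)) x"
    using s t q by (simp add: normal_density_sqrt mult_exp_exp)
  finally show ?thesis unfolding q_def .
qed

lemma gauss_vec_density_mult:
  fixes a b x :: "real^'k::finite"
  assumes "s > 0" "t > 0"
  shows "gauss_vec_density a (sqrt s) x * gauss_vec_density b (sqrt t) x
    = gauss_vec_density b (sqrt (s + t)) a
      * gauss_vec_density ((t / (s + t)) *\<^sub>R a + (s / (s + t)) *\<^sub>R b) (sqrt (s * t / (s + t))) x"
  unfolding gauss_vec_density_def prod.distrib[symmetric]
  using normal_density_mult[OF assms] by (simp add: add_divide_distrib)

lemma nn_integral_gauss_vec_density_mult:
  fixes a b :: "real^'k::finite"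
  assumes "s > 0" "t > 0"
  shows "(\<integral>\<^sup>+ x. ennreal (gauss_vec_density a (sqrt s) x) * ennreal (gauss_vec_density b (sqrt t) x) \<partial>lborel)
    = ennreal (gauss_vec_density b (sqrt (s + t)) a)"
proof -
  define c where "c = (t / (s + t)) *\<^sub>R a + (s / (s + t)) *\<^sub>R b"
  have r: "sqrt (s * t / (s + t)) > 0" using assms by simp
  have "(\<integral>\<^sup>+ x. ennreal (gauss_vec_density a (sqrt s) x) * ennreal (gauss_vec_density b (sqrt t) x) \<partial>lborel)
      = (\<integral>\<^sup>+ x. ennreal (gauss_vec_density b (sqrt (s + t)) a)
           * ennreal (gauss_vec_density c (sqrt (s * t / (s + t))) x) \<partial>lborel)"
    by (simp add: ennreal_mult[symmetric] gauss_vec_density_mult[OF assms] c_def)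
  also have "\<dots> = ennreal (gauss_vec_density b (sqrt (s + t)) a)"
    by (simp add: nn_integral_cmult nn_integral_gauss_vec_density[OF r])
  finally show ?thesis .
qed

lemma prod_normal_density_same_scale:
  fixes a :: "'m \<Rightarrow> real"
  assumes S: "finite S" "S \<noteq> {}" and s: "s > 0"
  shows "\<exists>C>0. \<forall>x. (\<Prod>m\<in>S. normal_density (a m) (sqrt s) x)
    = C * normal_density ((\<Sum>m\<in>S. a m) / card S) (sqrt (s / card S)) x"
proof -
  define k where "k = real (card S)"
  have k: "k > 0" using S by (simp add: k_def card_gt_0_iff)
  define A where "A = (\<Sum>m\<in>S. a m)"
  define B where "B = (\<Sum>m\<in>S. (a m)\<^sup>2)"
  define C where "C = sqrt (2 * pi * (s / k)) / sqrt (2 * pi * s) ^ card S * exp (- (B - A\<^sup>2 / k) / (2 * s))"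
  have "(\<Prod>m\<in>S. normal_density (a m) (sqrt s) x) = C * normal_density (A / k) (sqrt (s / k)) x" for x
  proof -
    have "(\<Sum>m\<in>S. (x - a m)\<^sup>2) = k * x\<^sup>2 - 2 * x * A + B"
      by (simp add: power2_diff sum.distrib sum_subtractf sum_distrib_left[symmetric] A_def B_def k_def
          algebra_simps sum_distrib_right)
    also have "\<dots> = k * (x - A / k)\<^sup>2 + (B - A\<^sup>2 / k)"
      using k by (simp add: field_simps power2_eq_square)
    finally have sum_sq: "(\<Sum>m\<in>S. (x - a m)\<^sup>2) = k * (x - A / k)\<^sup>2 + (B - A\<^sup>2 / k)" .
    have "(\<Sum>m\<in>S. - (x - a m)\<^sup>2 / (2 * s)) = - (\<Sum>m\<in>S. (x - a m)\<^sup>2) / (2 * s)"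
      by (simp add: sum_negf sum_divide_distrib)
    also have "\<dots> = - (x - A / k)\<^sup>2 / (2 * (s / k)) + - (B - A\<^sup>2 / k) / (2 * s)"
      unfolding sum_sq using k s by (simp add: field_simps)
    finally have sq: "(\<Sum>m\<in>S. - (x - a m)\<^sup>2 / (2 * s))
        = - (x - A / k)\<^sup>2 / (2 * (s / k)) + - (B - A\<^sup>2 / k) / (2 * s)" .
    have "(\<Prod>m\<in>S. normal_density (a m) (sqrt s) x)
        = (\<Prod>m\<in>S. exp (- (x - a m)\<^sup>2 / (2 * s))) / sqrt (2 * pi * s) ^ card S"
      using s by (simp add: normal_density_sqrt prod_dividef)
    also have "\<dots> = exp (- (x - A / k)\<^sup>2 / (2 * (s / k)) + - (B - A\<^sup>2 / k) / (2 * s))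
        / sqrt (2 * pi * s) ^ card S"
      by (simp only: exp_sum[OF S(1), symmetric] sq)
    also have "\<dots> = C * normal_density (A / k) (sqrt (s / k)) x"
      using s k by (simp add: C_def normal_density_sqrt mult_exp_exp)
    finally show ?thesis .
  qed
  moreover have "C > 0" using s k by (simp add: C_def)
  ultimately show ?thesis unfolding A_def k_def by blast
qed

lemma prod_gauss_vec_density_same_scale:
  fixes a :: "'m \<Rightarrow> real^'k::finite"
  assumes "finite S" "S \<noteq> {}" "s > 0"
  shows "\<exists>C>0. \<forall>x. (\<Prod>m\<in>S. gauss_vec_density (a m) (sqrt s) x)
    = C * gauss_vec_density ((1 / card S) *\<^sub>R (\<Sum>m\<in>S. a m)) (sqrt (s / card S)) x"
proof -
  have "\<forall>i. \<exists>C>0. \<forall>x. (\<Prod>m\<in>S. normal_density (a m $ i) (sqrt s) x)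
    = C * normal_density ((\<Sum>m\<in>S. a m $ i) / card S) (sqrt (s / card S)) x"
    by (intro allI prod_normal_density_same_scale[OF assms])
  then obtain C where C: "\<forall>i. C i > 0 \<and> (\<forall>x. (\<Prod>m\<in>S. normal_density (a m $ i) (sqrt s) x)
    = C i * normal_density ((\<Sum>m\<in>S. a m $ i) / card S) (sqrt (s / card S)) x)"
    unfolding choice_iff by blast
  have "(\<Prod>m\<in>S. gauss_vec_density (a m) (sqrt s) x)
      = (\<Prod>i\<in>UNIV. C i) * gauss_vec_density ((1 / card S) *\<^sub>R (\<Sum>m\<in>S. a m)) (sqrt (s / card S)) x" for x
    unfolding gauss_vec_density_def by (subst prod.swap) (simp add: C prod.distrib)
  moreover have "(\<Prod>i\<in>UNIV. C i) > 0" using C by (simp add: prod_pos)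
  ultimately show ?thesis by blast
qed

section \<open>Orthogonal designs\<close>

lemma matrix_vector_mult_mat: "(mat c :: real^'n::finite^'n) *v x = c *\<^sub>R x"
  by (simp add: vec_eq_iff matrix_vector_mult_def mat_def if_distrib if_distribR cong: if_cong)

lemma matrix_mul_mat: "(mat a :: real^'n::finite^'n) ** mat b = mat (a * b)"
  by (simp add: matrix_eq matrix_vector_mul_assoc[symmetric] matrix_vector_mult_mat)

lemma matrix_inv_mat:
  assumes "c \<noteq> (0::real)"
  shows "matrix_inv (mat c :: real^'n::finite^'n) = mat (inverse c)"
proof -
  define A where "A = matrix_inv (mat c :: real^'n^'n)"
  have "\<exists>B::real^'n^'n. mat c ** B = mat 1 \<and> B ** mat c = mat 1"
    using assms by (intro exI[of _ "mat (inverse c)"]) (simp add: matrix_mul_mat)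
  then have A: "mat c ** A = mat 1 \<and> A ** mat c = mat 1"
    unfolding A_def matrix_inv_def by (rule someI_ex)
  have "A = (mat (inverse c) ** mat c) ** A"
    using assms by (simp add: matrix_mul_mat)
  also have "\<dots> = mat (inverse c)"
    using A by (simp add: matrix_mul_assoc[symmetric])
  finally show ?thesis unfolding A_def .
qed

lemma inner_matrix_vector_mult: "(A *v u) \<bullet> y = u \<bullet> (transpose A *v y)"
  for A :: "real^'n::finite^'m::finite"
  by (metis dot_lmul_matrix inner_commute transpose_matrix_vector)

lemma local_est_orthogonal:
  assumes "transpose X ** X = mat rho" "rho \<noteq> 0"
  shows "local_est X Y = (1 / rho) *\<^sub>R (transpose X *v Y)"
  unfolding local_est_def assms(1) matrix_inv_mat[OF assms(2)] matrix_vector_mult_mat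
  by (simp add: divide_inverse)

lemma norm_residual_orthogonal:
  fixes X :: "real^'d::finite^'b::finite"
  assumes XtX: "transpose X ** X = mat rho" and rho: "rho \<noteq> 0"
  shows "(norm (X *v w - Y))\<^sup>2
    = rho * (norm (w - local_est X Y))\<^sup>2 + ((norm Y)\<^sup>2 - rho * (norm (local_est X Y))\<^sup>2)"
proof -
  define h where "h = local_est X Y"
  have XtY: "transpose X *v Y = rho *\<^sub>R h"
    unfolding h_def local_est_orthogonal[OF XtX rho] using rho by simp
  have "(X *v w) \<bullet> (X *v w) = rho * (w \<bullet> w)"
    unfolding inner_matrix_vector_mult matrix_vector_mul_assoc XtX matrix_vector_mult_mat by simp
  moreover have "(X *v w) \<bullet> Y = rho * (w \<bullet> h)"
    unfolding inner_matrix_vector_mult XtY by simp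
  ultimately show ?thesis
    unfolding h_def[symmetric] power2_norm_eq_inner
    by (simp add: inner_diff_left inner_diff_right inner_commute[of Y "X *v w"] inner_commute[of h w]
        algebra_simps)
qed

lemma gauss_likelihood_orthogonal:
  fixes X :: "real^'d::finite^'b::finite"
  assumes XtX: "transpose X ** X = mat rho" and rho: "rho > 0" and sig: "sig > 0"
  shows "\<exists>K>0. \<forall>u. gauss_vec_density (X *v u) sig Y
    = K * gauss_vec_density (local_est X Y) (sqrt (sig\<^sup>2 / rho)) u"
proof -
  define h where "h = local_est X Y"
  define E where "E = (norm Y)\<^sup>2 - rho * (norm h)\<^sup>2"
  define cb where "cb = (1 / sqrt (2 * pi * sig\<^sup>2)) ^ CARD('b)"
  define cd where "cd = (1 / sqrt (2 * pi * (sqrt (sig\<^sup>2 / rho))\<^sup>2)) ^ CARD('d)"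
  define K where "K = cb * exp (- E / (2 * sig\<^sup>2)) / cd"
  have var: "(sqrt (sig\<^sup>2 / rho))\<^sup>2 = sig\<^sup>2 / rho"
    using rho by simp
  have "gauss_vec_density (X *v u) sig Y = K * gauss_vec_density h (sqrt (sig\<^sup>2 / rho)) u" for u
  proof -
    have "(norm (Y - X *v u))\<^sup>2 = rho * (norm (u - h))\<^sup>2 + E"
      unfolding E_def h_def using norm_residual_orthogonal[OF XtX, of u Y] rho
      by (simp add: norm_minus_commute)
    then have expo: "- (norm (Y - X *v u))\<^sup>2 / (2 * sig\<^sup>2)
        = - (norm (u - h))\<^sup>2 / (2 * (sqrt (sig\<^sup>2 / rho))\<^sup>2) + - E / (2 * sig\<^sup>2)"
      unfolding var using rho sig by (simp add: field_simps)
    have "cd \<noteq> 0" using rho sig by (simp add: cd_def)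
    then show ?thesis
      unfolding gauss_vec_density_eq expo exp_add cb_def[symmetric] cd_def[symmetric] K_def
      by simp
  qed
  moreover have "K > 0" unfolding K_def cb_def cd_def using rho sig by simp
  ultimately show ?thesis unfolding h_def by blast
qed

lemma stack_design_gram:
  fixes X :: "'c::finite \<Rightarrow> real^'d::finite^'b::finite" and rho :: real
  assumes "\<And>m. transpose (X m) ** X m = mat rho"
  shows "transpose (stack_design X) ** stack_design X = mat (CARD('c) * rho)"
proof -
  have "(transpose (stack_design X) ** stack_design X) $ i $ j = mat (CARD('c) * rho) $ i $ j" for i j
  proof -
    have "(transpose (stack_design X) ** stack_design X) $ i $ j
        = (\<Sum>p\<in>UNIV \<times> UNIV. X (fst p) $ snd p $ i * X (fst p) $ snd p $ j)"
      by (simp add: matrix_matrix_mult_def transpose_def stack_design_def UNIV_Times_UNIV)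
    also have "\<dots> = (\<Sum>m\<in>UNIV. \<Sum>r\<in>UNIV. X m $ r $ i * X m $ r $ j)"
      by (simp add: sum.cartesian_product case_prod_beta)
    also have "\<dots> = (\<Sum>m\<in>UNIV. (transpose (X m) ** X m) $ i $ j)"
      by (simp add: matrix_matrix_mult_def transpose_def)
    also have "\<dots> = mat (CARD('c) * rho) $ i $ j"
      by (simp add: assms) (simp add: mat_def)
    finally show ?thesis .
  qed
  then show ?thesis by (simp add: vec_eq_iff)
qed

lemma global_dp_orthogonal:
  fixes X :: "'c::finite \<Rightarrow> real^'d::finite^'b::finite"
  assumes XtX: "\<And>m. transpose (X m) ** X m = mat rho" and rho: "rho > 0"
  shows "global_dp X Y z = (1 / CARD('c)) *\<^sub>R (\<Sum>m\<in>UNIV. local_est (X m) (Y m) + z m)"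
proof -
  have N: "real CARD('c) * rho \<noteq> 0" using rho by simp
  have c: "inverse (real CARD('c)) * inverse rho * rho = 1 / CARD('c)"
    using rho by (simp add: divide_inverse)
  show ?thesis
    unfolding global_dp_def stack_design_gram[OF XtX] matrix_inv_mat[OF N] XtX matrix_vector_mult_mat
    by (simp add: scaleR_sum_right c)
qed

section \<open>The personalized model\<close>

lemma weighted_sq_dist_decomp:
  fixes h g w :: "'a::real_inner"
  assumes ac: "a + c \<noteq> 0"
  defines "W \<equiv> (a / (a + c)) *\<^sub>R h + (c / (a + c)) *\<^sub>R g"
  shows "a * (norm (w - h))\<^sup>2 + c * (norm (w - g))\<^sup>2
    = (a + c) * (norm (w - W))\<^sup>2 + (a * (norm (W - h))\<^sup>2 + c * (norm (W - g))\<^sup>2)"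
proof -
  have "(a + c) *\<^sub>R W = a *\<^sub>R h + c *\<^sub>R g"
    unfolding W_def using ac by (simp add: scaleR_add_right)
  then have "a *\<^sub>R (W - h) + c *\<^sub>R (W - g) = 0"
    by (simp add: algebra_simps)
  then have cross: "a * ((w - W) \<bullet> (W - h)) + c * ((w - W) \<bullet> (W - g)) = 0"
    by (metis inner_add_right inner_scaleR_right inner_zero_right)
  have expand: "(norm (w - v))\<^sup>2 = (norm (w - W))\<^sup>2 + 2 * ((w - W) \<bullet> (W - v)) + (norm (W - v))\<^sup>2"
    for v
  proof -
    have "(norm ((w - W) + (W - v)))\<^sup>2 = (norm (w - W))\<^sup>2 + 2 * ((w - W) \<bullet> (W - v)) + (norm (W - v))\<^sup>2"
      unfolding power2_norm_eq_inner inner_add_left inner_add_right inner_commute[of "W - v" "w - W"]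
      by simp
    then show ?thesis by simp
  qed
  show ?thesis
    unfolding expand[of h] expand[of g] using cross by (simp add: algebra_simps)
qed

lemma unique_minimizer_sq_dist:
  fixes f :: "'a::real_normed_vector \<Rightarrow> real"
  assumes "\<kappa> > 0" and f: "\<And>w. f w = \<kappa> * (norm (w - W))\<^sup>2 + R"
  shows "(\<forall>w. f W \<le> f w) \<and> (\<forall>w. f w \<le> f W \<longrightarrow> w = W)"
  using assms by (simp add: f mult_le_0_iff)

lemma pers_obj_orthogonal:
  fixes X :: "'c::finite \<Rightarrow> real^'d::finite^'b::finite" and Y :: "'c \<Rightarrow> real^'b"
    and z :: "'c \<Rightarrow> real^'d" and n :: 'c
  assumes XtX: "\<And>m. transpose (X m) ** X m = mat rho" and rho: "rho \<noteq> 0"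
  defines "b \<equiv> real CARD('b)"
  shows "pers_obj X Y z lam n w
    = (1 - lam / 2) * rho / b * (norm (w - local_est (X n) (Y n)))\<^sup>2
      + lam / 2 * (norm (w - global_dp X Y z))\<^sup>2
      + (1 - lam / 2) / b * ((norm (Y n))\<^sup>2 - rho * (norm (local_est (X n) (Y n)))\<^sup>2)"
proof -
  have "b > 0" unfolding b_def by simp
  then show ?thesis
    unfolding pers_obj_def local_loss_def num_samples_def norm_residual_orthogonal[OF XtX rho]
      b_def[symmetric]
    by (simp add: field_simps)
qed

lemma pers_obj_eq_sq_dist:
  fixes X :: "'c::finite \<Rightarrow> real^'d::finite^'b::finite" and Y :: "'c \<Rightarrow> real^'b"
    and z :: "'c \<Rightarrow> real^'d" and n :: 'c
  assumes XtX: "\<And>m. transpose (X m) ** X m = mat rho"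
    and rho: "rho > 0" and lam: "0 \<le> lam" "lam \<le> 2"
  defines "N \<equiv> real CARD('c)" and "b \<equiv> real CARD('b)"
  defines "W \<equiv> (b / ((2 - lam) * rho + b * lam)) *\<^sub>R
                ( ((2 - lam) * rho / b + lam / N) *\<^sub>R local_est (X n) (Y n)
                  + (lam / N) *\<^sub>R (\<Sum>m\<in>UNIV - {n}. local_est (X m) (Y m))
                  + (lam / N) *\<^sub>R (\<Sum>m\<in>UNIV. z m))"
  shows "\<exists>\<kappa>>0. \<exists>R. \<forall>w. pers_obj X Y z lam n w = \<kappa> * (norm (w - W))\<^sup>2 + R"
proof -
  define h where "h = local_est (X n) (Y n)"
  define S1 where "S1 = (\<Sum>m\<in>UNIV - {n}. local_est (X m) (Y m))"
  define S2 where "S2 = (\<Sum>m\<in>UNIV. z m)"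
  define g where "g = global_dp X Y z"
  define D where "D = (2 - lam) * rho + b * lam"
  define a where "a = (1 - lam / 2) * rho / b"
  define c where "c = lam / 2"
  have N: "N > 0" and b: "b > 0" unfolding N_def b_def by simp_all
  have D: "D > 0"
  proof (cases "lam = 2")
    case False
    then have "(2 - lam) * rho > 0" using lam rho by simp
    then show ?thesis unfolding D_def using b lam by (simp add: add_pos_nonneg)
  qed (use b in \<open>simp add: D_def\<close>)
  have ac: "a + c = D / (2 * b)" unfolding a_def c_def D_def using b by (simp add: field_simps)
  then have ac_pos: "a + c > 0" using D b by simp
  have g: "g = (1 / N) *\<^sub>R (h + S1 + S2)"
    unfolding g_def global_dp_orthogonal[OF XtX rho] N_def h_def S1_def S2_def sum.distrib
    by (simp add: sum.remove[of UNIV n])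
  have W: "W = (a / (a + c)) *\<^sub>R h + (c / (a + c)) *\<^sub>R g"
  proof -
    have q1: "a / (a + c) = (2 - lam) * rho / D" and q2: "c / (a + c) = b * lam / D"
      unfolding ac unfolding a_def c_def using b D by (simp_all add: field_simps)
    have c1: "a / (a + c) + c / (a + c) * (1 / N) = b / D * ((2 - lam) * rho / b + lam / N)"
      unfolding q1 q2 using b D N by (simp add: field_simps)
    have c2: "c / (a + c) * (1 / N) = b / D * (lam / N)"
      unfolding q2 using b D N by (simp add: field_simps)
    have "(a / (a + c)) *\<^sub>R h + (c / (a + c)) *\<^sub>R g
        = (a / (a + c) + c / (a + c) * (1 / N)) *\<^sub>R h + (c / (a + c) * (1 / N)) *\<^sub>R S1
          + (c / (a + c) * (1 / N)) *\<^sub>R S2"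
      unfolding g by (simp add: scaleR_add_right scaleR_add_left)
    also have "\<dots> = W"
      unfolding W_def D_def[symmetric] h_def[symmetric] S1_def[symmetric] S2_def[symmetric]
        scaleR_add_right scaleR_scaleR c1 unfolding c2 ..
    finally show ?thesis ..
  qed
  define R where "R = (1 - lam / 2) / b * ((norm (Y n))\<^sup>2 - rho * (norm h)\<^sup>2)"
  have "pers_obj X Y z lam n w = a * (norm (w - h))\<^sup>2 + c * (norm (w - g))\<^sup>2 + R" for w
    using rho by (simp add: pers_obj_orthogonal[OF XtX] a_def c_def h_def g_def R_def b_def)
  then have "pers_obj X Y z lam n w
      = (a + c) * (norm (w - W))\<^sup>2 + (a * (norm (W - h))\<^sup>2 + c * (norm (W - g))\<^sup>2 + R)" for w
    unfolding W using weighted_sq_dist_decomp[of a c w h g] ac_pos by simp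
  then show ?thesis using ac_pos by blast
qed

lemma pers_obj_unique_minimizer:
  fixes X :: "'c::finite \<Rightarrow> real^'d::finite^'b::finite" and Y :: "'c \<Rightarrow> real^'b"
    and z :: "'c \<Rightarrow> real^'d" and n :: 'c
  assumes XtX: "\<And>m. transpose (X m) ** X m = mat rho"
    and rho: "rho > 0" and lam: "0 \<le> lam" "lam \<le> 2"
  defines "N \<equiv> real CARD('c)" and "b \<equiv> real CARD('b)"
  defines "W \<equiv> (b / ((2 - lam) * rho + b * lam)) *\<^sub>R
                ( ((2 - lam) * rho / b + lam / N) *\<^sub>R local_est (X n) (Y n)
                  + (lam / N) *\<^sub>R (\<Sum>m\<in>UNIV - {n}. local_est (X m) (Y m))
                  + (lam / N) *\<^sub>R (\<Sum>m\<in>UNIV. z m))"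
  shows "(\<forall>w. pers_obj X Y z lam n W \<le> pers_obj X Y z lam n w)
    \<and> (\<forall>w. pers_obj X Y z lam n w \<le> pers_obj X Y z lam n W \<longrightarrow> w = W)"
proof -
  obtain \<kappa> R where "\<kappa> > 0" "\<And>w. pers_obj X Y z lam n w = \<kappa> * (norm (w - W))\<^sup>2 + R"
    using pers_obj_eq_sq_dist[where X = X and Y = Y and z = z and n = n, OF XtX rho lam]
    unfolding W_def N_def b_def by blast
  then show ?thesis by (rule unique_minimizer_sq_dist)
qed

section \<open>The posterior of the local model\<close>

lemma nn_integral_joint_density:
  fixes X :: "'c::finite \<Rightarrow> real^'d::finite^'b::finite" and Y :: "'c \<Rightarrow> real^'b"
    and K :: "'c \<Rightarrow> real" and n :: 'c
  assumes lik: "\<And>m u. gauss_vec_density (X m *v u) sig (Y m)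
      = K m * gauss_vec_density (local_est (X m) (Y m)) (sqrt T) u"
    and K: "\<And>m. K m > 0" and zeta: "zeta > 0" and T: "T > 0"
    and [measurable]: "A \<in> sets borel"
  shows "(\<integral>\<^sup>+ u. indicator A (u $ n) * ennreal (joint_density zeta sig X Y w u) \<partial>lborel)
    = ennreal (\<Prod>m\<in>UNIV. K m)
      * (\<integral>\<^sup>+ v. indicator A v * ennreal (gauss_vec_density w zeta v
                                       * gauss_vec_density (local_est (X n) (Y n)) (sqrt T) v) \<partial>lborel)
      * ennreal (\<Prod>m\<in>UNIV - {n}. gauss_vec_density (local_est (X m) (Y m)) (sqrt (zeta\<^sup>2 + T)) w)"
proof -
  define p where "p m v = gauss_vec_density w zeta v * gauss_vec_density (local_est (X m) (Y m)) (sqrt T) v"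
    for m v
  define f where "f m v = (if m = n then indicator A v else 1) * ennreal (p m v)" for m v
  have [measurable]: "f m \<in> borel_measurable borel" for m
    unfolding f_def p_def by measurable
  have p_nonneg: "p m v \<ge> 0" for m v
    by (simp add: p_def)
  have "indicator A (u $ n) * ennreal (joint_density zeta sig X Y w u)
      = ennreal (\<Prod>m\<in>UNIV. K m) * (\<Prod>m\<in>UNIV. f m (u $ m))" for u
  proof -
    have "joint_density zeta sig X Y w u = (\<Prod>m\<in>UNIV. K m) * (\<Prod>m\<in>UNIV. p m (u $ m))"
      unfolding joint_density_def lik p_def prod.distrib[symmetric] by (simp add: ac_simps)
    then show ?thesis
      using K by (simp add: f_def prod.distrib prod_ennreal p_nonneg ennreal_mult prod_nonneg
          less_imp_le mult_ac)
  qed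
  then have "(\<integral>\<^sup>+ u. indicator A (u $ n) * ennreal (joint_density zeta sig X Y w u) \<partial>lborel)
      = ennreal (\<Prod>m\<in>UNIV. K m) * (\<Prod>m\<in>UNIV. \<integral>\<^sup>+ v. f m v \<partial>lborel)"
    by (simp add: nn_integral_cmult nn_integral_lborel_vec_prod)
  also have "(\<Prod>m\<in>UNIV. \<integral>\<^sup>+ v. f m v \<partial>lborel)
      = (\<integral>\<^sup>+ v. f n v \<partial>lborel) * (\<Prod>m\<in>UNIV - {n}. \<integral>\<^sup>+ v. f m v \<partial>lborel)"
    by (rule prod.remove) auto
  finally have "(\<integral>\<^sup>+ u. indicator A (u $ n) * ennreal (joint_density zeta sig X Y w u) \<partial>lborel)
      = ennreal (\<Prod>m\<in>UNIV. K m)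
        * ((\<integral>\<^sup>+ v. f n v \<partial>lborel) * (\<Prod>m\<in>UNIV - {n}. \<integral>\<^sup>+ v. f m v \<partial>lborel))" .
  moreover have "(\<integral>\<^sup>+ v. f m v \<partial>lborel)
      = ennreal (gauss_vec_density (local_est (X m) (Y m)) (sqrt (zeta\<^sup>2 + T)) w)" if "m \<noteq> n" for m
    using that zeta T nn_integral_gauss_vec_density_mult[of "zeta\<^sup>2" T w "local_est (X m) (Y m)"]
    by (simp add: f_def p_def ennreal_mult)
  ultimately show ?thesis
    by (simp add: f_def p_def prod_ennreal mult.assoc)
qed

lemma post_mass_factor:
  fixes X :: "'c::finite \<Rightarrow> real^'d::finite^'b::finite" and Y :: "'c \<Rightarrow> real^'b"
    and K :: "'c \<Rightarrow> real" and n :: 'c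
  assumes lik: "\<And>m u. gauss_vec_density (X m *v u) sig (Y m)
      = K m * gauss_vec_density (local_est (X m) (Y m)) (sqrt T) u"
    and K: "\<And>m. K m > 0" and zeta: "zeta > 0" and T: "T > 0"
    and A[measurable]: "A \<in> sets borel"
  shows "post_mass zeta sig X Y n A = ennreal (\<Prod>m\<in>UNIV. K m) *
     (\<integral>\<^sup>+ v. indicator A v * ennreal (gauss_vec_density (local_est (X n) (Y n)) (sqrt T) v) *
        (\<integral>\<^sup>+ w. ennreal (gauss_vec_density v zeta w) *
           ennreal (\<Prod>m\<in>UNIV - {n}. gauss_vec_density (local_est (X m) (Y m)) (sqrt (zeta\<^sup>2 + T)) w)
         \<partial>lborel) \<partial>lborel)"
proof -
  define P where "P w = (\<Prod>m\<in>UNIV - {n}. gauss_vec_density (local_est (X m) (Y m)) (sqrt (zeta\<^sup>2 + T)) w)"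
    for w
  define F where "F w v = indicator A v * ennreal (gauss_vec_density w zeta v
      * gauss_vec_density (local_est (X n) (Y n)) (sqrt T) v) * ennreal (P w)" for w v :: "real^'d"
  have [measurable]: "P \<in> borel_measurable borel"
    unfolding P_def by measurable
  have [measurable]: "case_prod F \<in> borel_measurable (lborel \<Otimes>\<^sub>M lborel)"
    unfolding F_def split_beta' by measurable
  have "post_mass zeta sig X Y n A
      = (\<integral>\<^sup>+ w. ennreal (\<Prod>m\<in>UNIV. K m) * (\<integral>\<^sup>+ v. F w v \<partial>lborel) \<partial>lborel)"
  proof -
    have "(\<integral>\<^sup>+ v. F w v \<partial>lborel) = (\<integral>\<^sup>+ v. indicator A v * ennreal (gauss_vec_density w zeta v
        * gauss_vec_density (local_est (X n) (Y n)) (sqrt T) v) \<partial>lborel) * ennreal (P w)" for w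
      unfolding F_def by (rule nn_integral_multc) measurable
    then show ?thesis
      unfolding post_mass_def nn_integral_joint_density[OF lik K zeta T A] P_def
      by (simp add: mult.assoc)
  qed
  also have "\<dots> = ennreal (\<Prod>m\<in>UNIV. K m) * (\<integral>\<^sup>+ w. \<integral>\<^sup>+ v. F w v \<partial>lborel \<partial>lborel)"
    by (rule nn_integral_cmult) measurable
  also have "(\<integral>\<^sup>+ w. \<integral>\<^sup>+ v. F w v \<partial>lborel \<partial>lborel)
      = (\<integral>\<^sup>+ v. \<integral>\<^sup>+ w. F w v \<partial>lborel \<partial>lborel)"
    by (rule lborel_pair.Fubini'[symmetric]) simp
  also have "\<dots> = (\<integral>\<^sup>+ v. indicator A v * ennreal (gauss_vec_density (local_est (X n) (Y n)) (sqrt T) v) *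
        (\<integral>\<^sup>+ w. ennreal (gauss_vec_density v zeta w) * ennreal (P w) \<partial>lborel) \<partial>lborel)"
  proof (rule nn_integral_cong)
    fix v :: "real^'d"
    have "(\<lambda>w. F w v) = (\<lambda>w. (indicator A v * ennreal (gauss_vec_density (local_est (X n) (Y n)) (sqrt T) v))
        * (ennreal (gauss_vec_density v zeta w) * ennreal (P w)))"
      unfolding F_def by (auto simp: ennreal_mult gauss_vec_density_commute[of _ zeta] mult_ac)
    then show "(\<integral>\<^sup>+ w. F w v \<partial>lborel)
        = indicator A v * ennreal (gauss_vec_density (local_est (X n) (Y n)) (sqrt T) v)
        * (\<integral>\<^sup>+ w. ennreal (gauss_vec_density v zeta w) * ennreal (P w) \<partial>lborel)"
      by (simp add: nn_integral_cmult)
  qed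
  finally show ?thesis unfolding P_def .
qed

lemma nn_integral_gauss_mult_prod_same_scale:
  fixes a :: "'m \<Rightarrow> real^'k::finite"
  assumes S: "finite S" "S \<noteq> {}" and zeta: "zeta > 0" and s: "s > 0"
  shows "\<exists>C>0. \<forall>v. (\<integral>\<^sup>+ w. ennreal (gauss_vec_density v zeta w)
      * ennreal (\<Prod>m\<in>S. gauss_vec_density (a m) (sqrt s) w) \<partial>lborel)
    = ennreal (C * gauss_vec_density ((1 / card S) *\<^sub>R (\<Sum>m\<in>S. a m)) (sqrt (zeta\<^sup>2 + s / card S)) v)"
proof -
  obtain C where C: "C > 0" "\<And>w. (\<Prod>m\<in>S. gauss_vec_density (a m) (sqrt s) w)
      = C * gauss_vec_density ((1 / card S) *\<^sub>R (\<Sum>m\<in>S. a m)) (sqrt (s / card S)) w"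
    using prod_gauss_vec_density_same_scale[OF S s, of a] by blast
  have k: "s / card S > 0" using S s by (simp add: card_gt_0_iff)
  define ub where "ub = (1 / card S) *\<^sub>R (\<Sum>m\<in>S. a m)"
  have "(\<integral>\<^sup>+ w. ennreal (gauss_vec_density v zeta w)
      * ennreal (\<Prod>m\<in>S. gauss_vec_density (a m) (sqrt s) w) \<partial>lborel)
    = ennreal (C * gauss_vec_density ub (sqrt (zeta\<^sup>2 + s / card S)) v)" for v
  proof -
    have "(\<integral>\<^sup>+ w. ennreal (gauss_vec_density v zeta w)
        * ennreal (\<Prod>m\<in>S. gauss_vec_density (a m) (sqrt s) w) \<partial>lborel)
      = (\<integral>\<^sup>+ w. ennreal C * (ennreal (gauss_vec_density v zeta w)
        * ennreal (gauss_vec_density ub (sqrt (s / card S)) w)) \<partial>lborel)"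
      using C by (simp add: ub_def ennreal_mult mult_ac)
    also have "\<dots> = ennreal C * ennreal (gauss_vec_density ub (sqrt (zeta\<^sup>2 + s / card S)) v)"
      using nn_integral_gauss_vec_density_mult[of "zeta\<^sup>2" "s / card S" v ub] zeta k
      by (simp add: nn_integral_cmult)
    finally show ?thesis using C by (simp add: ennreal_mult)
  qed
  then show ?thesis using C unfolding ub_def by blast
qed

lemma gauss_posterior_coefficients:
  fixes T Z k :: real
  assumes T: "T > 0" and Z: "Z > 0" and k: "k > 0"
  defines "tt \<equiv> Z + (Z + T) / k"
  defines "sw2 \<equiv> inverse (k / (T + (k + 1) * Z) + 1 / T)"
  shows "T * tt / (T + tt) = sw2" and "tt / (T + tt) = sw2 / T"
    and "T / (T + tt) / k = sw2 / (T + (k + 1) * Z)"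
proof -
  define P where "P = (k + 1) * (T + Z)"
  define Q where "Q = T + (k + 1) * Z"
  have P: "P > 0" and Q: "Q > 0" unfolding P_def Q_def using T Z k by (simp_all add: add_pos_pos)
  have "k / Q + 1 / T = P / (T * Q)"
    unfolding P_def using T Q by (simp add: field_simps) (simp add: Q_def algebra_simps)
  then have sw2: "sw2 = T * Q / P"
    unfolding sw2_def Q_def[symmetric] by simp
  have tt: "tt = Q / k"
    unfolding tt_def Q_def using k by (simp add: field_simps)
  have Ttt: "T + tt = P / k"
    unfolding tt_def P_def using k by (simp add: field_simps)
  show "T * tt / (T + tt) = sw2" "tt / (T + tt) = sw2 / T" "T / (T + tt) / k = sw2 / (T + (k + 1) * Z)"
    unfolding Ttt unfolding tt sw2 Q_def[symmetric] using k T P Q by (simp_all add: field_simps)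
qed

lemma hierarchical_gauss_posterior:
  fixes uh :: "'c::finite \<Rightarrow> real^'d::finite" and n :: 'c
  assumes T: "T > 0" and zeta: "zeta > 0"
  defines "N \<equiv> real CARD('c)"
  defines "sw2 \<equiv> inverse ((N - 1) / (T + N * zeta\<^sup>2) + 1 / T)"
  defines "mu \<equiv> (sw2 / T) *\<^sub>R uh n + (sw2 / (T + N * zeta\<^sup>2)) *\<^sub>R (\<Sum>m\<in>UNIV - {n}. uh m)"
  shows "\<exists>C>0. \<forall>v. ennreal (gauss_vec_density (uh n) (sqrt T) v)
      * (\<integral>\<^sup>+ w. ennreal (gauss_vec_density v zeta w)
          * ennreal (\<Prod>m\<in>UNIV - {n}. gauss_vec_density (uh m) (sqrt (zeta\<^sup>2 + T)) w) \<partial>lborel)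
    = ennreal (C * gauss_vec_density mu (sqrt sw2) v)"
proof (cases "CARD('c) = 1")
  case True
  then have S: "UNIV - {n} = {}" by (metis card_1_singletonE Diff_cancel UNIV_I singletonD)
  have "sw2 = T" using True by (simp add: sw2_def N_def)
  moreover have "mu = uh n" unfolding mu_def S \<open>sw2 = T\<close> using T by simp
  ultimately show ?thesis
    unfolding S using T zeta by (auto simp: nn_integral_gauss_vec_density intro!: exI[of _ 1])
next
  case False
  define S where "S = UNIV - {n}"
  define k where "k = real (card S)"
  have "CARD('c) > 1" using False by (simp add: Suc_lessI finite_UNIV_card_ge_0)
  then have N: "N = k + 1" and k: "k > 0"
    unfolding k_def S_def N_def by (simp_all add: card_Diff_singleton)
  have S_ne: "finite S" "S \<noteq> {}" using k unfolding k_def by auto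
  define ub where "ub = (1 / k) *\<^sub>R (\<Sum>m\<in>S. uh m)"
  define tt where "tt = zeta\<^sup>2 + (zeta\<^sup>2 + T) / k"
  have tt: "tt > 0" using T k by (simp add: tt_def add_nonneg_pos)
  obtain C where C: "C > 0" "\<And>v. (\<integral>\<^sup>+ w. ennreal (gauss_vec_density v zeta w)
      * ennreal (\<Prod>m\<in>S. gauss_vec_density (uh m) (sqrt (zeta\<^sup>2 + T)) w) \<partial>lborel)
    = ennreal (C * gauss_vec_density ub (sqrt tt) v)"
    using nn_integral_gauss_mult_prod_same_scale[OF S_ne zeta, of "zeta\<^sup>2 + T" uh] T
    unfolding ub_def tt_def k_def by (auto simp: add_nonneg_pos)
  have "zeta\<^sup>2 > 0" using zeta by simp
  note coeffs = gauss_posterior_coefficients[OF T this k, folded tt_def]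
  have var: "T * tt / (T + tt) = sw2"
    using coeffs(1) unfolding sw2_def N by simp
  have mean: "(tt / (T + tt)) *\<^sub>R uh n + (T / (T + tt)) *\<^sub>R ub = mu"
    using coeffs(2,3) unfolding mu_def sw2_def ub_def S_def N by simp
  define KK where "KK = C * gauss_vec_density ub (sqrt (T + tt)) (uh n)"
  have "ennreal (gauss_vec_density (uh n) (sqrt T) v) * ennreal (C * gauss_vec_density ub (sqrt tt) v)
      = ennreal (KK * gauss_vec_density mu (sqrt sw2) v)" for v
    unfolding KK_def mean[symmetric] var[symmetric]
    using gauss_vec_density_mult[OF T tt, of "uh n" v ub] C(1)
    by (simp add: ennreal_mult[symmetric] mult_ac)
  moreover have "KK > 0" unfolding KK_def using C(1) T tt by (simp add: gauss_vec_density_pos)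
  ultimately show ?thesis using C(2) unfolding S_def by auto
qed

lemma post_prob_gaussian:
  fixes X :: "'c::finite \<Rightarrow> real^'d::finite^'b::finite" and Y :: "'c \<Rightarrow> real^'b" and n :: 'c
  assumes XtX: "\<And>m. transpose (X m) ** X m = mat rho"
    and rho: "rho > 0" and zeta: "zeta > 0" and sig: "sig > 0"
  defines "N \<equiv> real CARD('c)"
  defines "sw2 \<equiv> inverse ((N - 1) / (sig\<^sup>2 / rho + N * zeta\<^sup>2) + rho / sig\<^sup>2)"
  defines "mu \<equiv> (sw2 * rho / sig\<^sup>2) *\<^sub>R local_est (X n) (Y n)
    + (sw2 * rho / (sig\<^sup>2 + N * zeta\<^sup>2 * rho)) *\<^sub>R (\<Sum>m\<in>UNIV - {n}. local_est (X m) (Y m))"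
  shows "0 < post_mass zeta sig X Y n UNIV \<and> post_mass zeta sig X Y n UNIV < \<infinity> \<and>
    (\<forall>A \<in> sets borel. post_prob zeta sig X Y n A
       = (\<integral>\<^sup>+ v. indicator A v * ennreal (gauss_vec_density mu (sqrt sw2) v) \<partial>lborel))"
proof -
  define T where "T = sig\<^sup>2 / rho"
  have T: "T > 0" using rho sig by (simp add: T_def)
  have "\<forall>m. \<exists>K>0. \<forall>u. gauss_vec_density (X m *v u) sig (Y m)
      = K * gauss_vec_density (local_est (X m) (Y m)) (sqrt T) u"
    unfolding T_def by (intro allI gauss_likelihood_orthogonal[OF XtX rho sig])
  then obtain K where K: "\<And>m. K m > 0" and lik: "\<And>m u. gauss_vec_density (X m *v u) sig (Y m)
      = K m * gauss_vec_density (local_est (X m) (Y m)) (sqrt T) u"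
    unfolding choice_iff by blast
  have sw2_T: "sw2 = inverse ((N - 1) / (T + N * zeta\<^sup>2) + 1 / T)"
    unfolding sw2_def T_def by simp
  have "sw2 * rho / sig\<^sup>2 = sw2 / T" "sw2 * rho / (sig\<^sup>2 + N * zeta\<^sup>2 * rho) = sw2 / (T + N * zeta\<^sup>2)"
    unfolding T_def using rho by (simp_all add: field_simps)
  then have mu_T: "mu = (sw2 / T) *\<^sub>R local_est (X n) (Y n)
      + (sw2 / (T + N * zeta\<^sup>2)) *\<^sub>R (\<Sum>m\<in>UNIV - {n}. local_est (X m) (Y m))"
    unfolding mu_def by simp
  obtain C where C: "C > 0" "\<And>v. ennreal (gauss_vec_density (local_est (X n) (Y n)) (sqrt T) v)
      * (\<integral>\<^sup>+ w. ennreal (gauss_vec_density v zeta w) * ennreal (\<Prod>m\<in>UNIV - {n}.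
          gauss_vec_density (local_est (X m) (Y m)) (sqrt (zeta\<^sup>2 + T)) w) \<partial>lborel)
    = ennreal (C * gauss_vec_density mu (sqrt sw2) v)"
    using hierarchical_gauss_posterior[OF T zeta, of "\<lambda>m. local_est (X m) (Y m)" n]
    unfolding sw2_T mu_T N_def by blast
  define c where "c = (\<Prod>m\<in>UNIV. K m) * C"
  have c: "c > 0" using K C(1) by (simp add: c_def prod_pos)
  have mass: "post_mass zeta sig X Y n A
      = ennreal c * (\<integral>\<^sup>+ v. indicator A v * ennreal (gauss_vec_density mu (sqrt sw2) v) \<partial>lborel)"
    if A[measurable]: "A \<in> sets borel" for A
  proof -
    have "post_mass zeta sig X Y n A = ennreal (\<Prod>m\<in>UNIV. K m)
        * (\<integral>\<^sup>+ v. ennreal C * (indicator A v * ennreal (gauss_vec_density mu (sqrt sw2) v)) \<partial>lborel)"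
      unfolding post_mass_factor[OF lik K zeta T A] mult.assoc C(2)
      using C(1) by (simp add: ennreal_mult mult_ac)
    then show ?thesis
      using K C(1) by (simp add: c_def nn_integral_cmult ennreal_mult prod_nonneg less_imp_le mult.assoc)
  qed
  have "sw2 > 0"
    unfolding sw2_T using T zeta by (simp add: add_nonneg_pos N_def)
  then have mass_UNIV: "post_mass zeta sig X Y n UNIV = ennreal c"
    using mass[of UNIV] by (simp add: nn_integral_gauss_vec_density)
  have "ennreal c * I / ennreal c = I" for I
    using c by (subst mult.commute) (simp add: ennreal_mult_divide_eq)
  then show ?thesis
    using c by (simp add: mass mass_UNIV post_prob_def)
qed

theorem lemma3:
  fixes X :: "'c::finite \<Rightarrow> real^'d::finite^'b::finite"
    and Y :: "'c \<Rightarrow> real^'b"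
    and z :: "'c \<Rightarrow> real^'d"
    and rho zeta sig lam :: real
    and n :: 'c
  assumes XtX: "\<And>m. transpose (X m) ** X m = mat rho"
    and rho_pos: "rho > 0"
    and zeta_pos: "zeta > 0"
    and sigma_pos: "sig > 0"
    and lam: "0 \<le> lam" "lam \<le> 2"
  shows
    "(let N = real CARD('c); b = real CARD('b);
          uhat = (\<lambda>m. local_est (X m) (Y m));
          W = (b / ((2 - lam) * rho + b * lam)) *\<^sub>R
                ( ((2 - lam) * rho / b + lam / N) *\<^sub>R uhat n
                  + (lam / N) *\<^sub>R (\<Sum>m\<in>UNIV - {n}. uhat m)
                  + (lam / N) *\<^sub>R (\<Sum>m\<in>UNIV. z m)) in
        (\<forall>w. pers_obj X Y z lam n W \<le> pers_obj X Y z lam n w) \<and>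
        (\<forall>w. pers_obj X Y z lam n w \<le> pers_obj X Y z lam n W \<longrightarrow> w = W))
     \<and>
     (let N = real CARD('c);
          uhat = (\<lambda>m. local_est (X m) (Y m));
          sw2 = inverse ((N - 1) / (sig\<^sup>2 / rho + N * zeta\<^sup>2) + rho / sig\<^sup>2);
          mu = (sw2 * rho / sig\<^sup>2) *\<^sub>R uhat n
               + (sw2 * rho / (sig\<^sup>2 + N * zeta\<^sup>2 * rho)) *\<^sub>R (\<Sum>m\<in>UNIV - {n}. uhat m) in
        0 < post_mass zeta sig X Y n UNIV \<and> post_mass zeta sig X Y n UNIV < \<infinity> \<and>
        (\<forall>A \<in> sets borel.
           post_prob zeta sig X Y n A =
             (\<integral>\<^sup>+ v. indicator A v * ennreal (gauss_vec_density mu (sqrt sw2) v) \<partial>lborel)))"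
  unfolding Let_def
  using pers_obj_unique_minimizer[where X = X and Y = Y and z = z and n = n, OF XtX rho_pos lam]
    post_prob_gaussian[where X = X and Y = Y and n = n, OF XtX rho_pos zeta_pos sigma_pos]
  by simp

end
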